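(* Let $N=\{1,\ldots,n\}$ and $\mathcal{X}=\{-1,1\}^n$. A random voting rule $\bar\phi:\mathcal{X}\to[-1,1]$ is robust if and only if there exists $w\in\mathbb{R}_+^n$ such that for every $x\in\mathcal{X}$, $\bar\phi(x)$ and $\sum_{i\in N}w_ix_i$ are both nonzero and have the same sign, i.e. $\bar\phi(x)\sum_{i\in N}w_ix_i>0$ for all $x\in\mathcal{X}$.
   Context: A random voting rule $\bar\phi$ chooses outcome $1$ with probability $(1+\bar\phi(x))/2$ and $-1$ with probability $(1-\bar\phi(x))/2$ at profile $x$. Under $p\in\Delta(\mathcal{X})$ (probability distributions on $\mathcal{X}$), the responsiveness of individual $i$ is $(E_p[\bar\phi(x)x_i]+1)/2$. $\bar\phi$ is robust if for every $p\in\Delta(\mathcal{X})$ there is some $i\in N$ with $E_p[\bar\phi(x)x_i]>0$ (responsiveness strictly greater than $1/2$). *)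

theory Defs
  imports "HOL-Analysis.Analysis"
begin

text \<open>Voters are the elements of a finite type 'i (so N = UNIV, n = CARD('i)).
  Profiles are functions from voters to {-1,1}.\<close>

definition profiles :: "('i::finite \<Rightarrow> real) set" where
  "profiles = {x. \<forall>i. x i = 1 \<or> x i = -1}"

definition random_voting_rule :: "(('i::finite \<Rightarrow> real) \<Rightarrow> real) \<Rightarrow> bool" where
  "random_voting_rule phi \<longleftrightarrow> (\<forall>x\<in>profiles. -1 \<le> phi x \<and> phi x \<le> 1)"

definition distributions :: "(('i::finite \<Rightarrow> real) \<Rightarrow> real) set" where
  "distributions = {p. (\<forall>x\<in>profiles. 0 \<le> p x) \<and> (\<Sum>x\<in>profiles. p x) = 1}"

definition expect_corr :: "(('i::finite \<Rightarrow> real) \<Rightarrow> real) \<Rightarrow> (('i \<Rightarrow> real) \<Rightarrow> real) \<Rightarrow> 'i \<Rightarrow> real" where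
  "expect_corr p phi i = (\<Sum>x\<in>profiles. p x * phi x * x i)"

definition robust :: "(('i::finite \<Rightarrow> real) \<Rightarrow> real) \<Rightarrow> bool" where
  "robust phi \<longleftrightarrow> (\<forall>p\<in>distributions. \<exists>i. expect_corr p phi i > 0)"

end

theory Submission
  imports Defs
begin

text \<open>Robustness says that the convex hull of the finitely many vectors
  \<open>(\<phi>(x) x\<^sub>i)\<^sub>i\<close>, \<open>x \<in> \<X>\<close>, misses the closed
  nonpositive orthant, because a point of that hull is exactly the vector
  \<open>(E\<^sub>p[\<phi>(x) x\<^sub>i])\<^sub>i\<close> of some distribution \<open>p\<close>. Strictly separating this
  compact convex set from the orthant yields a linear functional \<open>w\<close>; since the
  orthant is a cone, \<open>w\<close> is nonnegative and positive on the hull, in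
  particular at every vector \<open>(\<phi>(x) x\<^sub>i)\<^sub>i\<close>. Conversely, such weights make
  \<open>\<Sum>\<^sub>i w\<^sub>i E\<^sub>p[\<phi>(x) x\<^sub>i]\<close> positive for every \<open>p\<close>, so some term is positive.
  This is Ville's theorem of the alternative.\<close>

lemma convex_hull_finite_image:
  fixes f :: "'a \<Rightarrow> 'b::real_vector"
  assumes "finite S"
  shows "convex hull (f ` S) =
    {\<Sum>x\<in>S. p x *\<^sub>R f x | p. (\<forall>x\<in>S. 0 \<le> p x) \<and> sum p S = 1}"
proof -
  have "f ` S = \<Union>((\<lambda>x. {f x}) ` S)" by auto
  then show ?thesis
    by (auto simp: convex_hull_finite_union[OF assms])
qed

lemma inner_nonneg_nonpos:
  fixes w y :: "real^'n"
  assumes "0 \<le> w" "y \<le> 0"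
  shows "w \<bullet> y \<le> 0"
  using assms by (auto simp: inner_vec_def less_eq_vec_def intro: sum_nonpos mult_nonneg_nonpos)

lemma nonneg_functional_positive_on_compact_convex:
  fixes C :: "(real^'n) set"
  assumes "convex C" "compact C" "\<forall>y\<in>C. \<not> y \<le> 0"
  shows "\<exists>w\<ge>0. \<forall>y\<in>C. 0 < w \<bullet> y"
proof (cases "C = {}")
  case True
  then show ?thesis by auto
next
  case False
  have "convex {..0::real^'n}" by (simp add: is_interval_convex is_interval_ic)
  moreover have "{..0} \<inter> C = {}" using assms(3) by auto
  ultimately obtain w b where below: "\<forall>y\<in>{..0}. w \<bullet> y < b" and above: "\<forall>y\<in>C. b < w \<bullet> y"
    using separating_hyperplane_closed_compact[of "{..0}" C] assms False by auto
  have b_pos: "0 < b" using below[rule_format, of 0] by simp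
  have "0 \<le> w $ i" for i
  proof (rule ccontr)
    assume "\<not> 0 \<le> w $ i"
    then have "w $ i < 0" by simp
    define y :: "real^'n" where "y = axis i (b / w $ i)"
    have "y \<le> 0"
      using b_pos \<open>w $ i < 0\<close> by (simp add: y_def less_eq_vec_def axis_def divide_pos_neg less_imp_le)
    moreover have "w \<bullet> y = b"
      using \<open>w $ i < 0\<close> by (simp add: y_def inner_axis)
    ultimately show False using below by auto
  qed
  then show ?thesis
    using above b_pos by (auto simp: less_eq_vec_def intro!: exI[of _ w])
qed

theorem ville_alternative:
  fixes a :: "'a \<Rightarrow> real^'n"
  assumes "finite S"
  shows "(\<forall>p. (\<forall>x\<in>S. 0 \<le> p x) \<and> sum p S = 1 \<longrightarrow> \<not> (\<Sum>x\<in>S. p x *\<^sub>R a x) \<le> 0)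
    \<longleftrightarrow> (\<exists>w\<ge>0. \<forall>x\<in>S. 0 < w \<bullet> a x)"
proof -
  have "(\<forall>p. (\<forall>x\<in>S. 0 \<le> p x) \<and> sum p S = 1 \<longrightarrow> \<not> (\<Sum>x\<in>S. p x *\<^sub>R a x) \<le> 0)
      \<longleftrightarrow> (\<forall>y\<in>convex hull (a ` S). \<not> y \<le> 0)"
    by (auto simp: convex_hull_finite_image[OF assms])
  also have "\<dots> \<longleftrightarrow> (\<exists>w\<ge>0. \<forall>y\<in>convex hull (a ` S). 0 < w \<bullet> y)"
  proof
    assume "\<forall>y\<in>convex hull (a ` S). \<not> y \<le> 0"
    then show "\<exists>w\<ge>0. \<forall>y\<in>convex hull (a ` S). 0 < w \<bullet> y"
      using assms by (intro nonneg_functional_positive_on_compact_convex)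
        (auto simp: compact_convex_hull finite_imp_compact)
  next
    assume "\<exists>w\<ge>0. \<forall>y\<in>convex hull (a ` S). 0 < w \<bullet> y"
    then show "\<forall>y\<in>convex hull (a ` S). \<not> y \<le> 0"
      by (meson inner_nonneg_nonpos not_le)
  qed
  also have "\<dots> \<longleftrightarrow> (\<exists>w\<ge>0. \<forall>x\<in>S. 0 < w \<bullet> a x)"
  proof -
    have "(\<forall>y\<in>convex hull (a ` S). 0 < w \<bullet> y) \<longleftrightarrow> (\<forall>x\<in>S. 0 < w \<bullet> a x)" for w
    proof
      assume "\<forall>x\<in>S. 0 < w \<bullet> a x"
      then have "convex hull (a ` S) \<subseteq> {y. 0 < w \<bullet> y}"
        by (intro hull_minimal) (auto simp: convex_halfspace_gt)
      then show "\<forall>y\<in>convex hull (a ` S). 0 < w \<bullet> y" by blast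
    qed (auto intro: hull_inc)
    then show ?thesis by simp
  qed
  finally show ?thesis .
qed

lemma finite_profiles: "finite (profiles :: ('i::finite \<Rightarrow> real) set)"
proof -
  have "profiles = PiE (UNIV :: 'i set) (\<lambda>_. {1, -1 :: real})"
    by (auto simp: profiles_def PiE_UNIV_domain)
  then show ?thesis using finite_PiE[of "UNIV :: 'i set" "\<lambda>_. {1, -1 :: real}"] by simp
qed

lemma ex_nonneg_vec_iff:
  "(\<exists>w :: real^'n. 0 \<le> w \<and> P w) \<longleftrightarrow> (\<exists>w. (\<forall>i. 0 \<le> w i) \<and> P (vec_lambda w))"
  by (metis less_eq_vec_def vec_lambda_beta vec_lambda_eta zero_index)

theorem propositionA:
  fixes phi :: "('i::finite \<Rightarrow> real) \<Rightarrow> real"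
  assumes "random_voting_rule phi"
  shows "robust phi \<longleftrightarrow>
    (\<exists>w :: 'i \<Rightarrow> real. (\<forall>i. 0 \<le> w i) \<and>
       (\<forall>x\<in>profiles. phi x * (\<Sum>i\<in>UNIV. w i * x i) > 0))"
proof -
  define a :: "('i \<Rightarrow> real) \<Rightarrow> real^'i" where "a x = (\<chi> i. phi x * x i)" for x
  have corr: "(\<Sum>x\<in>profiles. p x * a x $ i) = expect_corr p phi i" for p i
    by (simp add: a_def expect_corr_def mult.assoc)
  have inner: "w \<bullet> a x = phi x * (\<Sum>i\<in>UNIV. w $ i * x i)" for w x
    by (simp add: a_def inner_vec_def sum_distrib_left algebra_simps)
  have "robust phi \<longleftrightarrow>
      (\<forall>p. (\<forall>x\<in>profiles. 0 \<le> p x) \<and> sum p profiles = 1 \<longrightarrow> \<not> (\<Sum>x\<in>profiles. p x *\<^sub>R a x) \<le> 0)"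
    by (auto simp: robust_def distributions_def less_eq_vec_def corr not_le)
  also have "\<dots> \<longleftrightarrow> (\<exists>w\<ge>0. \<forall>x\<in>profiles. 0 < w \<bullet> a x)"
    by (rule ville_alternative[OF finite_profiles])
  also have "\<dots> \<longleftrightarrow> (\<exists>w :: 'i \<Rightarrow> real. (\<forall>i. 0 \<le> w i) \<and>
       (\<forall>x\<in>profiles. phi x * (\<Sum>i\<in>UNIV. w i * x i) > 0))"
    by (simp add: ex_nonneg_vec_iff inner)
  finally show ?thesis .
qed

end
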